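(* Consider the two optimization problems \[ \text{(P1)}\quad \min_{q\in\mathbb{R}^{n},\,\theta\in\mathbb{R}^{n}} \ \sum_{j=1}^{n} J_j(q_j) \quad\text{s.t.}\quad q-d-CB\tilde\theta=0,\quad \underline F\le B\tilde\theta\le \overline F,\quad\text{where }\tilde\theta:=C^T\theta, \] \[ \text{(P2)}\quad \min_{q\in\mathbb{R}^{n}} \ \sum_{j=1}^{n} J_j(q_j) \quad\text{s.t.}\quad \mathbf 1^T(q-d)=0,\quad H^T(q-d)\le F . \] Then $(q^*,\tilde\theta^* )$ is an optimal solution to (P1) (i.e. $(q^*,\theta^* )$ is optimal for some $\theta^*$ with $C^T\theta^*=\tilde\theta^*$) if and only if $\tilde\theta^*=C^TL^{\dagger}(q^*-d)$ and $q^*$ is an optimal solution to (P2).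
   Context: A power network is a connected directed graph $(\mathcal N,\mathcal E)$ with $\mathcal N=\{1,\dots,n\}$ and edge set $\mathcal E\subset\mathcal N\times\mathcal N$ (if $(j,k)\in\mathcal E$ then $(k,j)\notin\mathcal E$). $C\in\mathbb{R}^{n\times|\mathcal E|}$ is the incidence matrix: $C_{j,e}=1$ if $e=(j,k)\in\mathcal E$, $C_{j,e}=-1$ if $e=(k,j)\in\mathcal E$, and $0$ otherwise. $B=\mathrm{diag}(B_{jk},(j,k)\in\mathcal E)$ is a diagonal matrix with positive diagonal entries. $L:=CBC^T$ and $L^\dagger$ is its Moore–Penrose inverse. $H\in\mathbb{R}^{n\times 2|\mathcal E|}$ is defined by $H^T=\begin{bmatrix} BC^TL^\dagger\\ -BC^TL^\dagger\end{bmatrix}$. Given line limits $\underline F,\overline F\in\mathbb{R}^{|\mathcal E|}$, $F:=\begin{bmatrix}\overline F\\ -\underline F\end{bmatrix}$. $d\in\mathbb{R}^n$ is a given demand vector, and each $J_j:\mathbb{R}\to\mathbb{R}$ is strictly convex and twice differentiable. $\mathbf 1$ is the all-ones vector. *)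

theory Defs
  imports "HOL-Analysis.Analysis"
begin

text \<open>Nodes are indexed by a finite type 'n, edges by a finite type 'e.
  The map ends assigns to each edge index e the ordered pair (j,k) with e = (j,k).\<close>

definition power_network :: "('e::finite \<Rightarrow> 'n::finite \<times> 'n) \<Rightarrow> bool" where
  "power_network ends \<longleftrightarrow>
     inj ends \<and>
     (\<forall>j k. (j, k) \<in> range ends \<longrightarrow> (k, j) \<notin> range ends) \<and>
     (\<forall>u v. (u, v) \<in> (range ends \<union> converse (range ends))\<^sup>*)"

definition incidence :: "('e::finite \<Rightarrow> 'n::finite \<times> 'n) \<Rightarrow> real^'e^'n" where
  "incidence ends = (\<chi> j e. if fst (ends e) = j then 1
                              else if snd (ends e) = j then -1 else 0)"

definition diag_mat :: "('e::finite \<Rightarrow> real) \<Rightarrow> real^'e^'e" where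
  "diag_mat b = (\<chi> i j. if i = j then b i else 0)"

definition strict_convex_on :: "real set \<Rightarrow> (real \<Rightarrow> real) \<Rightarrow> bool" where
  "strict_convex_on S f \<longleftrightarrow>
     (\<forall>x\<in>S. \<forall>y\<in>S. x \<noteq> y \<longrightarrow> (\<forall>u. 0 < u \<and> u < 1 \<longrightarrow>
        f (u * x + (1 - u) * y) < u * f x + (1 - u) * f y))"

definition mp_pinv :: "real^'n::finite^'m::finite \<Rightarrow> real^'m^'n" where
  "mp_pinv A = (THE X. A ** X ** A = A \<and> X ** A ** X = X \<and>
                 transpose (A ** X) = A ** X \<and> transpose (X ** A) = X ** A)"

definition lap :: "('e::finite \<Rightarrow> 'n::finite \<times> 'n) \<Rightarrow> ('e \<Rightarrow> real) \<Rightarrow> real^'n^'n" where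
  "lap ends b = incidence ends ** diag_mat b ** transpose (incidence ends)"

text \<open>H^T, a (2|E|) x n matrix; the 2|E| rows are indexed by 'e + 'e.\<close>
definition HT :: "('e::finite \<Rightarrow> 'n::finite \<times> 'n) \<Rightarrow> ('e \<Rightarrow> real) \<Rightarrow> real^'n^('e + 'e)" where
  "HT ends b = (let M = diag_mat b ** transpose (incidence ends) ** mp_pinv (lap ends b)
                in (\<chi> r. case r of Inl e \<Rightarrow> M $ e | Inr e \<Rightarrow> - (M $ e)))"

definition Fvec :: "real^'e::finite \<Rightarrow> real^'e \<Rightarrow> real^('e + 'e)" where
  "Fvec Flo Fup = (\<chi> r. case r of Inl e \<Rightarrow> Fup $ e | Inr e \<Rightarrow> - (Flo $ e))"

definition objective :: "('n::finite \<Rightarrow> real \<Rightarrow> real) \<Rightarrow> real^'n \<Rightarrow> real" where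
  "objective J q = (\<Sum>j\<in>UNIV. J j (q $ j))"

definition P1_feasible ::
  "('e::finite \<Rightarrow> 'n::finite \<times> 'n) \<Rightarrow> ('e \<Rightarrow> real) \<Rightarrow> real^'n \<Rightarrow> real^'e \<Rightarrow> real^'e
   \<Rightarrow> real^'n \<Rightarrow> real^'n \<Rightarrow> bool" where
  "P1_feasible ends b d Flo Fup q \<theta> \<longleftrightarrow>
     (let C = incidence ends; B = diag_mat b; \<theta>t = transpose C *v \<theta> in
        q - d - C *v (B *v \<theta>t) = 0 \<and> Flo \<le> B *v \<theta>t \<and> B *v \<theta>t \<le> Fup)"

definition P1_optimal ::
  "('n::finite \<Rightarrow> real \<Rightarrow> real) \<Rightarrow> ('e::finite \<Rightarrow> 'n \<times> 'n) \<Rightarrow> ('e \<Rightarrow> real) \<Rightarrow> real^'n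
   \<Rightarrow> real^'e \<Rightarrow> real^'e \<Rightarrow> real^'n \<Rightarrow> real^'n \<Rightarrow> bool" where
  "P1_optimal J ends b d Flo Fup q \<theta> \<longleftrightarrow>
     P1_feasible ends b d Flo Fup q \<theta> \<and>
     (\<forall>q' \<theta>'. P1_feasible ends b d Flo Fup q' \<theta>' \<longrightarrow> objective J q \<le> objective J q')"

definition P2_feasible ::
  "('e::finite \<Rightarrow> 'n::finite \<times> 'n) \<Rightarrow> ('e \<Rightarrow> real) \<Rightarrow> real^'n \<Rightarrow> real^'e \<Rightarrow> real^'e
   \<Rightarrow> real^'n \<Rightarrow> bool" where
  "P2_feasible ends b d Flo Fup q \<longleftrightarrow>
     (1::real^'n) \<bullet> (q - d) = 0 \<and> HT ends b *v (q - d) \<le> Fvec Flo Fup"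

definition P2_optimal ::
  "('n::finite \<Rightarrow> real \<Rightarrow> real) \<Rightarrow> ('e::finite \<Rightarrow> 'n \<times> 'n) \<Rightarrow> ('e \<Rightarrow> real) \<Rightarrow> real^'n
   \<Rightarrow> real^'e \<Rightarrow> real^'e \<Rightarrow> real^'n \<Rightarrow> bool" where
  "P2_optimal J ends b d Flo Fup q \<longleftrightarrow>
     P2_feasible ends b d Flo Fup q \<and>
     (\<forall>q'. P2_feasible ends b d Flo Fup q' \<longrightarrow> objective J q \<le> objective J q')"

end

theory Submission
  imports Defs
begin

(* Both problems minimise the same function of q alone, so it suffices to show that (q, theta) is
   feasible for (P1) exactly when q is feasible for (P2) and C^T theta = C^T L^+ (q - d).
   Connectivity and B > 0 make the kernel of the symmetric matrix L = C B C^T the line spanned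
   by 1, so L L^+ = L^+ L is the orthogonal projection onto the hyperplane orthogonal to 1.
   Hence the flow equation q - d = L theta holds iff 1^T (q - d) = 0 and
   C^T theta = C^T L^+ (q - d); then B C^T theta = B C^T L^+ (q - d), and the line limits on it
   are exactly H^T (q - d) <= F. *)

declare transpose_matrix_vector[simp del]

lemma inner_symmetric_matrix:
  fixes A :: "real^'n::finite^'n"
  assumes "transpose A = A"
  shows "inner u (A *v x) = inner (A *v u) x"
  by (metis assms dot_lmul_matrix transpose_matrix_vector)

lemma mp_pinv_eqI:
  fixes A :: "real^'n::finite^'m::finite" and X :: "real^'m^'n"
  assumes X1: "A ** X ** A = A" and X2: "X ** A ** X = X"
    and X3: "transpose (A ** X) = A ** X" and X4: "transpose (X ** A) = X ** A"
  shows "mp_pinv A = X"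
  unfolding mp_pinv_def
proof (rule the_equality)
  show "A ** X ** A = A \<and> X ** A ** X = X \<and> transpose (A ** X) = A ** X \<and> transpose (X ** A) = X ** A"
    using assms by blast
next
  fix Y assume "A ** Y ** A = A \<and> Y ** A ** Y = Y \<and> transpose (A ** Y) = A ** Y \<and> transpose (Y ** A) = Y ** A"
  then have Y1: "A ** Y ** A = A" and Y2: "Y ** A ** Y = Y"
    and Y3: "transpose (A ** Y) = A ** Y" and Y4: "transpose (Y ** A) = Y ** A" by blast+
  have tA: "transpose A = transpose A ** transpose Z ** transpose A"
    if "A ** Z ** A = A" for Z :: "real^'m^'n"
    using that by (metis matrix_transpose_mul matrix_mul_assoc)
  have "X = X ** (A ** X)" using X2 by (simp add: matrix_mul_assoc)
  also have "\<dots> = X ** (transpose X ** transpose A)" using X3 by (metis matrix_transpose_mul)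
  also have "\<dots> = X ** (transpose X ** (transpose A ** transpose Y ** transpose A))"
    using tA[OF Y1] by metis
  also have "\<dots> = X ** (transpose (A ** X) ** transpose (A ** Y))"
    by (simp add: matrix_transpose_mul matrix_mul_assoc)
  also have "\<dots> = X ** A ** Y" using X2 X3 Y3 by (simp add: matrix_mul_assoc)
  finally have X_eq: "X = X ** A ** Y" .
  have "Y = (Y ** A) ** Y" using Y2 by (simp add: matrix_mul_assoc)
  also have "\<dots> = transpose A ** transpose Y ** Y" using Y4 by (metis matrix_transpose_mul)
  also have "\<dots> = (transpose A ** transpose X ** transpose A) ** transpose Y ** Y"
    using tA[OF X1] by metis
  also have "\<dots> = transpose (X ** A) ** transpose (Y ** A) ** Y"
    by (simp add: matrix_transpose_mul matrix_mul_assoc)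
  also have "\<dots> = X ** A ** (Y ** A ** Y)" using X4 Y4 by (simp add: matrix_mul_assoc)
  also have "\<dots> = X ** A ** Y" using Y2 by simp
  finally have "Y = X ** A ** Y" .
  with X_eq show "Y = X" by simp
qed

definition perp_proj :: "real^'n::finite \<Rightarrow> real^'n^'n" where
  "perp_proj u = mat 1 - (\<chi> i j. u $ i * u $ j / inner u u)"

lemma perp_proj_apply: "perp_proj u *v x = x - (inner u x / inner u u) *\<^sub>R u"
proof -
  have "(\<chi> i j. u $ i * u $ j / inner u u) *v x = (inner u x / inner u u) *\<^sub>R u"
    by (simp add: vec_eq_iff matrix_vector_mult_def inner_vec_def[of u x]
        sum_divide_distrib sum_distrib_left mult_ac)
  then show ?thesis by (simp add: perp_proj_def matrix_vector_mult_diff_rdistrib)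
qed

lemma transpose_perp_proj: "transpose (perp_proj u) = perp_proj u"
  by (simp add: perp_proj_def transpose_def mat_def vec_eq_iff mult.commute eq_commute)

lemma symmetric_kernel_line_inverse:
  fixes A :: "real^'n::finite^'n" and u :: "real^'n"
  assumes sym: "transpose A = A" and "u \<noteq> 0" and Au: "A *v u = 0"
    and ker: "\<And>x. A *v x = 0 \<Longrightarrow> \<exists>c. x = c *\<^sub>R u"
  obtains P where "A ** P = perp_proj u" and "P ** A = perp_proj u"
    and "\<And>x. inner u (P *v x) = 0"
proof -
  have uu: "inner u u > 0" using \<open>u \<noteq> 0\<close> by simp
  have uA: "inner u (A *v x) = 0" for x
    by (simp add: inner_symmetric_matrix[OF sym] Au)
  \<comment> \<open>\<open>M = A + u u\<^sup>T / |u|\<^sup>2\<close> is invertible, and \<open>M\<^sup>-\<^sup>1 - u u\<^sup>T / |u|\<^sup>2\<close> inverts \<open>A\<close> on \<open>u\<^sup>\<bottom>\<close>.\<close>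
  define M where "M = A + mat 1 - perp_proj u"
  have M_apply: "M *v x = A *v x + (inner u x / inner u u) *\<^sub>R u" for x
    by (simp add: M_def matrix_vector_mult_add_rdistrib matrix_vector_mult_diff_rdistrib perp_proj_apply)
  have uM: "inner u (M *v x) = inner u x" for x
    using uu by (simp add: M_apply inner_add_right uA)
  have "M *v x = 0 \<Longrightarrow> x = 0" for x
  proof -
    assume "M *v x = 0"
    then have "inner u x = 0" using uM[of x] by simp
    with \<open>M *v x = 0\<close> have "A *v x = 0" by (simp add: M_apply)
    then obtain c where "x = c *\<^sub>R u" using ker by blast
    with \<open>inner u x = 0\<close> uu show "x = 0" by simp
  qed
  then obtain Mi where MiM: "Mi ** M = mat 1"
    using matrix_left_invertible_ker by blast
  then have MMi: "M ** Mi = mat 1" by (simp add: matrix_left_right_inverse)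
  have Mi_M: "Mi *v (M *v x) = x" and M_Mi: "M *v (Mi *v x) = x" for x
    by (simp_all add: matrix_vector_mul_assoc MiM MMi)
  have Mi_u: "Mi *v u = u" using Mi_M[of u] uu by (simp add: M_apply Au)
  have uMi: "inner u (Mi *v x) = inner u x" for x using uM[of "Mi *v x"] by (simp add: M_Mi)
  define P where "P = Mi - mat 1 + perp_proj u"
  have P_apply: "P *v x = Mi *v x - (inner u x / inner u u) *\<^sub>R u" for x
    by (simp add: P_def matrix_vector_mult_add_rdistrib matrix_vector_mult_diff_rdistrib perp_proj_apply)
  have "A *v (P *v x) = M *v (Mi *v x) - (inner u (Mi *v x) / inner u u) *\<^sub>R u" for x
    by (simp add: P_apply M_apply matrix_vector_mult_diff_distrib matrix_vector_mult_scaleR Au)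
  then have "A ** P = perp_proj u"
    by (simp add: matrix_eq M_Mi uMi perp_proj_apply flip: matrix_vector_mul_assoc)
  moreover have "Mi *v (A *v x) = x - (inner u x / inner u u) *\<^sub>R u" for x
    using Mi_M[of x]
    by (simp add: M_apply matrix_vector_right_distrib matrix_vector_mult_scaleR Mi_u eq_diff_eq)
  then have "P ** A = perp_proj u"
    by (simp add: matrix_eq P_apply uA perp_proj_apply flip: matrix_vector_mul_assoc)
  moreover have "inner u (P *v x) = 0" for x
    using uu by (simp add: P_apply inner_diff_right uMi)
  ultimately show thesis by (rule that)
qed

lemma mp_pinv_symmetric_kernel_line:
  fixes A :: "real^'n::finite^'n" and u :: "real^'n"
  assumes "transpose A = A" and "u \<noteq> 0" and "A *v u = 0"
    and "\<And>x. A *v x = 0 \<Longrightarrow> \<exists>c. x = c *\<^sub>R u"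
  shows "A ** mp_pinv A = perp_proj u" and "mp_pinv A ** A = perp_proj u"
proof -
  obtain P where AP: "A ** P = perp_proj u" and PA: "P ** A = perp_proj u"
    and uP: "\<And>x. inner u (P *v x) = 0"
    using symmetric_kernel_line_inverse[OF assms] by blast
  have uA: "inner u (A *v x) = 0" for x
    by (simp add: inner_symmetric_matrix[OF assms(1)] assms(3))
  have "mp_pinv A = P"
  proof (rule mp_pinv_eqI)
    show "A ** P ** A = A"
      by (simp add: AP matrix_eq perp_proj_apply uA flip: matrix_vector_mul_assoc)
    show "P ** A ** P = P"
      by (simp add: PA matrix_eq perp_proj_apply uP flip: matrix_vector_mul_assoc)
    show "transpose (A ** P) = A ** P" and "transpose (P ** A) = P ** A"
      by (simp_all only: AP PA transpose_perp_proj)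
  qed
  with AP PA show "A ** mp_pinv A = perp_proj u" and "mp_pinv A ** A = perp_proj u" by simp_all
qed

lemma power_network_no_loops:
  assumes "power_network ends"
  shows "fst (ends e) \<noteq> snd (ends e)"
  using assms unfolding power_network_def by (metis prod.collapse rangeI)

lemma incidence_transpose_apply:
  assumes "power_network ends"
  shows "(transpose (incidence ends) *v x) $ e = x $ fst (ends e) - x $ snd (ends e)"
proof -
  have "(transpose (incidence ends) *v x) $ e =
      (\<Sum>j\<in>UNIV. (if fst (ends e) = j then x $ j else 0) + (if snd (ends e) = j then - x $ j else 0))"
    using power_network_no_loops[OF assms, of e]
    by (auto simp: matrix_vector_mult_def transpose_def incidence_def intro!: sum.cong)
  then show ?thesis by (simp add: sum.distrib)
qed

lemma diag_mat_apply: "(diag_mat b *v y) $ e = b e * y $ e"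
  by (simp add: matrix_vector_mult_def diag_mat_def if_distrib if_distribR cong: if_cong)

lemma lap_mult_vec:
  "lap ends b *v x = incidence ends *v (diag_mat b *v (transpose (incidence ends) *v x))"
  by (simp add: lap_def matrix_vector_mul_assoc matrix_mul_assoc)

lemma transpose_lap: "transpose (lap ends b) = lap ends b"
proof -
  have "transpose (diag_mat b) = diag_mat b"
    by (simp add: vec_eq_iff transpose_def diag_mat_def)
  then show ?thesis by (simp add: lap_def matrix_transpose_mul matrix_mul_assoc)
qed

lemma incidence_transpose_one:
  assumes "power_network ends"
  shows "transpose (incidence ends) *v 1 = 0"
  by (simp add: vec_eq_iff incidence_transpose_apply[OF assms])

lemma lap_one:
  assumes "power_network ends"
  shows "lap ends b *v 1 = 0"
  by (simp add: lap_mult_vec incidence_transpose_one[OF assms])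

lemma inner_lap:
  "inner x (lap ends b *v x) = (\<Sum>e\<in>UNIV. b e * ((transpose (incidence ends) *v x) $ e)\<^sup>2)"
proof -
  let ?y = "transpose (incidence ends) *v x"
  have "inner x (lap ends b *v x) = inner ?y (diag_mat b *v ?y)"
    by (simp only: lap_mult_vec flip: dot_lmul_matrix transpose_matrix_vector)
  then show ?thesis
    by (simp add: inner_vec_def diag_mat_apply power2_eq_square mult_ac)
qed

lemma lap_kernel:
  assumes net: "power_network ends" and bpos: "\<forall>e. 0 < b e"
    and "lap ends b *v x = 0"
  shows "\<exists>c. x = c *\<^sub>R 1"
proof -
  have "(\<Sum>e\<in>UNIV. b e * ((transpose (incidence ends) *v x) $ e)\<^sup>2) = 0"
    using inner_lap[of x ends b] \<open>lap ends b *v x = 0\<close> by simp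
  then have "\<forall>e\<in>UNIV. b e * ((transpose (incidence ends) *v x) $ e)\<^sup>2 = 0"
    using bpos by (simp add: sum_nonneg_eq_0_iff less_imp_le)
  then have edge: "x $ fst (ends e) = x $ snd (ends e)" for e
    using bpos by (simp add: incidence_transpose_apply[OF net] less_imp_neq[symmetric])
  have "x $ a = x $ v" for a v
  proof -
    have "(a, v) \<in> (range ends \<union> converse (range ends))\<^sup>*"
      using net unfolding power_network_def by blast
    then show ?thesis
    proof (induction rule: rtrancl_induct)
      case (step y z)
      then show ?case using edge by (auto simp: image_iff) (metis fst_conv snd_conv)+
    qed simp
  qed
  then have "x = (x $ a) *\<^sub>R 1" for a by (simp add: vec_eq_iff)
  then show ?thesis by blast
qed

lemma lap_mp_pinv:
  fixes ends :: "'e::finite \<Rightarrow> 'n::finite \<times> 'n"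
  assumes "power_network ends" and "\<forall>e. 0 < b e"
  shows "lap ends b ** mp_pinv (lap ends b) = perp_proj 1"
    and "mp_pinv (lap ends b) ** lap ends b = perp_proj 1"
proof -
  have "(1::real^'n) \<noteq> 0" by (simp add: vec_eq_iff)
  from mp_pinv_symmetric_kernel_line[OF transpose_lap[of ends b] this
      lap_one[OF assms(1)] lap_kernel[OF assms]]
  show "lap ends b ** mp_pinv (lap ends b) = perp_proj 1"
    and "mp_pinv (lap ends b) ** lap ends b = perp_proj 1"
    by simp_all
qed

lemma lap_eq_iff:
  fixes ends :: "'e::finite \<Rightarrow> 'n::finite \<times> 'n"
  assumes net: "power_network ends" and bpos: "\<forall>e. 0 < b e"
  shows "v = lap ends b *v \<theta> \<longleftrightarrow>
    inner 1 v = 0 \<and>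
    transpose (incidence ends) *v \<theta> = transpose (incidence ends) *v (mp_pinv (lap ends b) *v v)"
    (is "_ \<longleftrightarrow> _ \<and> ?C\<theta> = ?Cv")
proof
  assume v: "v = lap ends b *v \<theta>"
  show "inner 1 v = 0 \<and> ?C\<theta> = ?Cv"
  proof
    show "inner 1 v = 0"
      by (simp add: v inner_symmetric_matrix[OF transpose_lap] lap_one[OF net])
    have "mp_pinv (lap ends b) *v v = \<theta> - (inner 1 \<theta> / inner (1::real^'n) 1) *\<^sub>R 1"
      by (simp add: v matrix_vector_mul_assoc lap_mp_pinv(2)[OF net bpos] perp_proj_apply)
    then show "?C\<theta> = ?Cv"
      by (simp add: matrix_vector_mult_diff_distrib matrix_vector_mult_scaleR
          incidence_transpose_one[OF net])
  qed
next
  assume "inner 1 v = 0 \<and> ?C\<theta> = ?Cv"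
  then have "lap ends b *v \<theta> = lap ends b *v (mp_pinv (lap ends b) *v v)" and "inner 1 v = 0"
    by (simp_all only: lap_mult_vec)
  then show "v = lap ends b *v \<theta>"
    by (simp add: matrix_vector_mul_assoc lap_mp_pinv(1)[OF net bpos] perp_proj_apply)
qed

lemma HT_le_Fvec_iff:
  "HT ends b *v v \<le> Fvec Flo Fup \<longleftrightarrow>
    Flo \<le> diag_mat b *v (transpose (incidence ends) *v (mp_pinv (lap ends b) *v v)) \<and>
    diag_mat b *v (transpose (incidence ends) *v (mp_pinv (lap ends b) *v v)) \<le> Fup"
proof -
  define M where "M = diag_mat b ** transpose (incidence ends) ** mp_pinv (lap ends b)"
  have M_apply: "diag_mat b *v (transpose (incidence ends) *v (mp_pinv (lap ends b) *v v)) = M *v v"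
    by (simp add: M_def matrix_vector_mul_assoc matrix_mul_assoc)
  have "(HT ends b *v v) $ Inl e = (M *v v) $ e" and "(HT ends b *v v) $ Inr e = - (M *v v) $ e" for e
    by (simp_all add: HT_def M_def Let_def matrix_vector_mult_def sum_negf)
  then show ?thesis
    unfolding M_apply less_eq_vec_def by (auto simp: Fvec_def split: sum.split)
qed

lemma P1_feasible_iff:
  fixes ends :: "'e::finite \<Rightarrow> 'n::finite \<times> 'n"
  assumes "power_network ends" and "\<forall>e. 0 < b e"
  shows "P1_feasible ends b d Flo Fup q \<theta> \<longleftrightarrow>
    transpose (incidence ends) *v \<theta> = transpose (incidence ends) *v (mp_pinv (lap ends b) *v (q - d))
    \<and> P2_feasible ends b d Flo Fup q"
proof -
  have "q - d - incidence ends *v (diag_mat b *v (transpose (incidence ends) *v \<theta>)) = 0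
      \<longleftrightarrow> q - d = lap ends b *v \<theta>"
    by (simp add: lap_mult_vec)
  then show ?thesis
    unfolding P1_feasible_def P2_feasible_def HT_le_Fvec_iff lap_eq_iff[OF assms] Let_def by auto
qed

lemma P1_optimal_iff:
  fixes ends :: "'e::finite \<Rightarrow> 'n::finite \<times> 'n"
  assumes "power_network ends" and "\<forall>e. 0 < b e"
  shows "P1_optimal J ends b d Flo Fup q \<theta> \<longleftrightarrow>
    transpose (incidence ends) *v \<theta> = transpose (incidence ends) *v (mp_pinv (lap ends b) *v (q - d))
    \<and> P2_optimal J ends b d Flo Fup q"
  unfolding P1_optimal_def P2_optimal_def P1_feasible_iff[OF assms] by blast

theorem lemma1:
  fixes ends :: "'e::finite \<Rightarrow> 'n::finite \<times> 'n"
    and b :: "'e \<Rightarrow> real"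
    and J :: "'n \<Rightarrow> real \<Rightarrow> real"
    and d :: "real^'n"
    and Flo Fup :: "real^'e"
    and qs :: "real^'n" and ths :: "real^'e"
  assumes net: "power_network ends"
    and bpos: "\<forall>e. 0 < b e"
    and Jconv: "\<forall>j. strict_convex_on UNIV (J j)"
    and Jdiff: "\<forall>j. \<exists>J' J''. \<forall>x. (J j has_real_derivative J' x) (at x) \<and>
                                   (J' has_real_derivative J'' x) (at x)"
  shows "(\<exists>\<theta>. transpose (incidence ends) *v \<theta> = ths \<and> P1_optimal J ends b d Flo Fup qs \<theta>)
     \<longleftrightarrow> (ths = transpose (incidence ends) *v (mp_pinv (lap ends b) *v (qs - d))
          \<and> P2_optimal J ends b d Flo Fup qs)"
  unfolding P1_optimal_iff[OF net bpos] by blast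

end
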